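(* Let $A\in\mathbb{R}^{m\times n}$, $E\in\mathbb{R}^{m\times m}$, $F\in\mathbb{R}^{n\times n}$ with $I_m+E$ and $I_n+F$ nonsingular, and let $b,\epsilon\in\mathbb{R}^m$. Set $\tilde A = (I_m+E)A(I_n+F) = A+\Delta A$ with $\Delta A = EA + AF + EAF$, and $\tilde b = b+\epsilon$. Assume the noiseless system $Ax=b$ is consistent and let $x_{\rm LS}=A^\dagger b$. Let $(x_k)_{k\ge0}$ be the iterates of the randomized Kaczmarz algorithm applied to $\tilde A x\approx\tilde b$, with starting point $x_0$ satisfying $x_0 - x_{\rm LS}\in\operatorname{range}(\tilde A^\top)$. Then for every $k\ge0$, $$\mathbb{E}\|x_k - x_{\rm LS}\|^2 \le \left(1-\frac{1}{\tilde R}\right)^k\|x_0 - x_{\rm LS}\|^2 + \frac{\|\Delta A\, x_{\rm LS} - \epsilon\|^2}{\sigma_{\min}^2(\tilde A)},$$ where $\tilde R = \|\tilde A^\dagger\|^2\,\|\tilde A\|_F^2$.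
   Context: Norms of vectors are Euclidean; $\|M\|$ is the spectral norm, $\|M\|_F$ the Frobenius norm, $M^\dagger$ the Moore–Penrose pseudoinverse, $\sigma_{\min}(M)$ the smallest nonzero singular value of $M$, and $I_m$ the $m\times m$ identity. The randomized Kaczmarz (RK) algorithm applied to a system $\tilde A x\approx \tilde b$ (with $\tilde A$ having nonzero rows $\tilde a_1^\top,\dots,\tilde a_m^\top$) generates, from a starting point $x_0$, the iterates $x_{k+1} = x_k - \frac{\tilde a_{i(k)}^\top x_k - \tilde b_{i(k)}}{\|\tilde a_{i(k)}\|^2}\tilde a_{i(k)}$, where the indices $i(k)$ are drawn independently with $\Pr[i(k)=i] = \|\tilde a_i\|^2/\|\tilde A\|_F^2$. The expectation is over these random indices. *)

theory Defs
  imports "HOL-Analysis.Analysis" "HOL-Probability.Probability"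
begin

definition pinv :: "real^'n^'m \<Rightarrow> real^'m^'n" where
  "pinv A = (THE X. A ** X ** A = A \<and> X ** A ** X = X \<and>
                    transpose (A ** X) = A ** X \<and> transpose (X ** A) = X ** A)"

definition spec_norm :: "real^'n^'m \<Rightarrow> real" where
  "spec_norm A = onorm (\<lambda>x. A *v x)"

definition frob_norm :: "real^'n^'m \<Rightarrow> real" where
  "frob_norm A = sqrt (\<Sum>i\<in>UNIV. \<Sum>j\<in>UNIV. (A $ i $ j)^2)"

definition sigma_min :: "real^'n^'m \<Rightarrow> real" where
  "sigma_min A = sqrt (Min {l. l \<noteq> 0 \<and>
      (\<exists>v. v \<noteq> 0 \<and> (transpose A ** A) *v v = l *s v)})"

definition row_pmf :: "real^'n^'m \<Rightarrow> 'm pmf" where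
  "row_pmf A = embed_pmf (\<lambda>i. (norm (row i A))^2 / (frob_norm A)^2)"

definition rk_step :: "real^'n^'m \<Rightarrow> real^'m \<Rightarrow> real^'n \<Rightarrow> 'm \<Rightarrow> real^'n" where
  "rk_step A b x i = x - ((row i A \<bullet> x - b $ i) / (norm (row i A))^2) *\<^sub>R row i A"

primrec rk_iter :: "real^'n^'m \<Rightarrow> real^'m \<Rightarrow> real^'n \<Rightarrow> nat \<Rightarrow> (real^'n) pmf" where
  "rk_iter A b x0 0 = return_pmf x0"
| "rk_iter A b x0 (Suc k) =
     bind_pmf (rk_iter A b x0 k) (\<lambda>x. map_pmf (rk_step A b x) (row_pmf A))"

end

theory Submission
  imports Defs
begin

text \<open>Let z be any point and r = c - M z its residual. A Kaczmarz step projects x onto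
  the hyperplane of row i; averaging the resulting Pythagorean identity over the row distribution
  gives exactly E|x' - z|^2 = |x - z|^2 - (|M (x - z)|^2 - |r|^2) / |M|_F^2. The iterates stay in
  z + row space of M, where |M v| >= sigma_min |v|, because sigma_min^2 is the minimum of the
  Rayleigh quotient of M^T M on the row space (a minimiser is an eigenvector). So the error
  contracts by 1 - sigma_min^2 / |M|_F^2 <= 1 - 1/R (using |pinv M| sigma_min >= 1) up to the
  additive term |r|^2 / |M|_F^2, whose geometric sum is |r|^2 / sigma_min^2. For the perturbed
  system, z = x_LS gives r = epsilon - dA x_LS, since A x_LS = b.\<close>

definition row_space :: "real^'n^'m \<Rightarrow> (real^'n) set" where
  "row_space A = range (\<lambda>y. transpose A *v y)"

lemma inner_matrix_vector_transpose: "(A *v x) \<bullet> y = x \<bullet> (transpose A *v (y::real^'m))"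
  by (metis dot_lmul_matrix vector_transpose_matrix)

lemma row_eq_nth: "row i A = A $ i"
  by (simp add: row_def vec_eq_iff)

lemma subspace_range_matrix_vector_mult: "subspace (range (\<lambda>x. (A::real^'n^'m) *v x))"
  by (rule linear_subspace_image[OF matrix_vector_mul_linear subspace_UNIV])

lemma subspace_row_space: "subspace (row_space A)"
  unfolding row_space_def by (rule subspace_range_matrix_vector_mult)

lemma transpose_mult_in_row_space: "transpose A *v y \<in> row_space A"
  by (simp add: row_space_def)

lemma row_in_row_space: "row i A \<in> row_space A"
proof -
  have "transpose A *v axis i 1 = row i A"
    by (simp add: vec_eq_iff matrix_vector_mul_component inner_axis transpose_def row_def)
  then show ?thesis
    by (metis transpose_mult_in_row_space)
qed

lemma row_space_null_eq_zero:
  assumes "u \<in> row_space A" "A *v u = 0"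
  shows "u = 0"
proof -
  obtain y where u: "u = transpose A *v y"
    using assms(1) unfolding row_space_def by auto
  have "u \<bullet> u = y \<bullet> (A *v u)"
    by (metis u inner_commute inner_matrix_vector_transpose)
  then show ?thesis
    using assms(2) by simp
qed

lemma null_if_orthogonal_row_space:
  fixes A :: "real^'n^'m"
  assumes "\<And>u. u \<in> row_space A \<Longrightarrow> x \<bullet> u = 0"
  shows "A *v x = 0"
proof -
  have "(A *v x) \<bullet> (A *v x) = x \<bullet> (transpose A *v (A *v x))"
    by (rule inner_matrix_vector_transpose)
  also have "\<dots> = 0"
    by (intro assms transpose_mult_in_row_space)
  finally show ?thesis
    by simp
qed

lemma nonzero_if_row_nonzero: "row i A \<noteq> 0 \<Longrightarrow> A \<noteq> 0"
  by (metis row_eq_nth zero_index)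

lemma row_space_nonzero:
  fixes A :: "real^'n^'m"
  assumes "A \<noteq> 0"
  obtains v where "v \<in> row_space A" "v \<noteq> 0"
proof -
  obtain i where "row i A \<noteq> 0"
    using assms by (metis row_eq_nth vec_eq_iff zero_index)
  then show ?thesis
    using that row_in_row_space by blast
qed

definition outer_sum :: "(real^'m) set \<Rightarrow> (real^'m \<Rightarrow> real^'n) \<Rightarrow> real^'m^'n" where
  "outer_sum B f = (\<chi> i j. \<Sum>w\<in>B. f w $ i * w $ j)"

lemma outer_sum_mult: "outer_sum B f *v y = (\<Sum>w\<in>B. (w \<bullet> y) *\<^sub>R f w)"
  by (simp add: vec_eq_iff outer_sum_def matrix_vector_mult_def inner_vec_def
      sum_distrib_left sum_distrib_right sum.swap[of _ UNIV B] mult_ac)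

lemma transpose_outer_sum_id: "transpose (outer_sum B (\<lambda>w. w)) = outer_sum B (\<lambda>w. w)"
  by (simp add: vec_eq_iff outer_sum_def transpose_def mult.commute)

locale orthonormal_family =
  fixes B :: "(real^'k) set"
  assumes finite: "finite B"
    and orthonormal: "\<And>b c. b \<in> B \<Longrightarrow> c \<in> B \<Longrightarrow> b \<bullet> c = (if b = c then 1 else 0)"
begin

abbreviation proj :: "real^'k^'k" where
  "proj \<equiv> outer_sum B (\<lambda>w. w)"

lemma proj_in_span: "proj *v x \<in> span B"
  unfolding outer_sum_mult by (intro span_sum span_mul span_base)

lemma inner_proj:
  assumes "c \<in> B"
  shows "c \<bullet> (proj *v x) = c \<bullet> x"
proof -
  have "c \<bullet> (proj *v x) = (\<Sum>w\<in>B. if w = c then c \<bullet> x else 0)"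
    unfolding outer_sum_mult inner_sum_right
    by (intro sum.cong refl) (use assms orthonormal in auto)
  also have "\<dots> = c \<bullet> x"
    using assms finite by simp
  finally show ?thesis .
qed

lemma proj_residual_orthogonal:
  assumes "u \<in> span B"
  shows "u \<bullet> (x - proj *v x) = 0"
proof -
  have "orthogonal (x - proj *v x) u"
  proof (rule orthogonal_to_span[OF assms])
    fix c
    assume "c \<in> B"
    then show "orthogonal (x - proj *v x) c"
      by (simp add: orthogonal_def inner_commute inner_diff_right inner_proj)
  qed
  then show ?thesis
    by (simp add: orthogonal_def inner_commute)
qed

lemma proj_fixes_span:
  assumes "u \<in> span B"
  shows "proj *v u = u"
proof -
  have "u - proj *v u \<in> span B"
    using assms proj_in_span by (simp add: span_diff)
  then have "(u - proj *v u) \<bullet> (u - proj *v u) = 0"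
    using proj_residual_orthogonal by simp
  then show ?thesis
    by simp
qed

lemma matrix_vector_mult_proj_row_space:
  fixes A :: "real^'k^'m"
  assumes "span B = row_space A"
  shows "A *v (proj *v z) = A *v z"
proof -
  have "A *v (z - proj *v z) = 0"
    using proj_residual_orthogonal assms
    by (intro null_if_orthogonal_row_space) (simp add: inner_commute)
  then show ?thesis
    by (simp add: vec.diff)
qed

end

lemma orthonormal_basis_exists:
  fixes U :: "(real^'k) set"
  assumes "subspace U"
  obtains B where "orthonormal_family B" "B \<subseteq> U" "span B = U"
proof -
  obtain B where B: "B \<subseteq> U" "pairwise orthogonal B" "\<And>x. x \<in> B \<Longrightarrow> norm x = 1"
      "independent B" "span B = U"
    using orthonormal_basis_subspace[OF assms] by metis
  have "b \<bullet> c = (if b = c then 1 else 0)" if "b \<in> B" "c \<in> B" for b c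
    using B(2,3) that by (auto simp: pairwise_def orthogonal_def norm_eq_1)
  then have "orthonormal_family B"
    using B(4) independent_imp_finite by unfold_locales
  then show ?thesis
    using that B by blast
qed

definition penrose :: "real^'n^'m \<Rightarrow> real^'m^'n \<Rightarrow> bool" where
  "penrose A X \<longleftrightarrow> A ** X ** A = A \<and> X ** A ** X = X \<and>
                    transpose (A ** X) = A ** X \<and> transpose (X ** A) = X ** A"

lemma pinv_eq_The_penrose: "pinv A = (THE X. penrose A X)"
  by (simp add: pinv_def penrose_def)

lemma penrose_transpose_absorb_right:
  assumes "penrose A Y"
  shows "transpose A ** A ** Y = transpose A"
proof -
  have "transpose A ** A ** Y = transpose A ** transpose (A ** Y)"
    using assms by (simp add: penrose_def matrix_mul_assoc)
  also have "\<dots> = transpose (A ** Y ** A)"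
    by (simp add: matrix_transpose_mul matrix_mul_assoc)
  finally show ?thesis
    using assms by (simp add: penrose_def)
qed

lemma penrose_transpose_absorb_left:
  assumes "penrose A X"
  shows "X ** A ** transpose A = transpose A"
proof -
  have "X ** A ** transpose A = transpose (X ** A) ** transpose A"
    using assms by (simp add: penrose_def)
  also have "\<dots> = transpose (A ** X ** A)"
    by (simp add: matrix_transpose_mul matrix_mul_assoc)
  finally show ?thesis
    using assms by (simp add: penrose_def)
qed

lemma penrose_unique:
  assumes X: "penrose A X" and Y: "penrose A Y"
  shows "X = Y"
proof -
  have "X = X ** transpose (A ** X)"
    using X by (simp add: penrose_def matrix_mul_assoc)
  also have "\<dots> = X ** transpose X ** (transpose A ** A ** Y)"
    by (simp add: penrose_transpose_absorb_right[OF Y] matrix_transpose_mul matrix_mul_assoc)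
  also have "\<dots> = X ** transpose (A ** X) ** A ** Y"
    by (simp add: matrix_transpose_mul matrix_mul_assoc)
  also have "\<dots> = X ** A ** Y"
    using X by (simp add: penrose_def matrix_mul_assoc)
  finally have XAY: "X = X ** A ** Y" .
  have "Y = transpose (Y ** A) ** Y"
    using Y by (simp add: penrose_def)
  also have "\<dots> = (X ** A ** transpose A) ** transpose Y ** Y"
    by (simp add: penrose_transpose_absorb_left[OF X] matrix_transpose_mul)
  also have "\<dots> = X ** A ** (transpose (Y ** A) ** Y)"
    by (simp add: matrix_transpose_mul matrix_mul_assoc)
  also have "\<dots> = X ** A ** Y"
    using Y by (simp add: penrose_def matrix_mul_assoc)
  finally show ?thesis
    using XAY by simp
qed

lemma row_space_preimage:
  fixes A :: "real^'n^'m"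
  assumes "w \<in> range (\<lambda>x. A *v x)"
  obtains p where "p \<in> row_space A" "A *v p = w"
proof -
  obtain B where "orthonormal_family B" "span B = row_space A"
    using orthonormal_basis_exists[OF subspace_row_space] by metis
  then interpret orthonormal_family B
    by simp
  obtain z where "w = A *v z"
    using assms by auto
  then show ?thesis
    using that proj_in_span matrix_vector_mult_proj_row_space \<open>span B = row_space A\<close> by metis
qed

text \<open>X sends an orthonormal basis of the range of A to preimages in the row space; then A X and
  X A are the orthogonal projections onto the range and onto the row space.\<close>

lemma penrose_exists:
  fixes A :: "real^'n^'m"
  shows "\<exists>X. penrose A X"
proof -
  obtain BV where BV: "orthonormal_family BV" "span BV = row_space A"
    using orthonormal_basis_exists[OF subspace_row_space] by metis
  obtain BW where BW: "orthonormal_family BW" "BW \<subseteq> range (\<lambda>x. A *v x)"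
      "span BW = range (\<lambda>x. A *v x)"
    using orthonormal_basis_exists[OF subspace_range_matrix_vector_mult] by metis
  interpret V: orthonormal_family BV by (fact BV(1))
  interpret W: orthonormal_family BW by (fact BW(1))
  obtain pre where pre: "\<And>w. w \<in> BW \<Longrightarrow> pre w \<in> row_space A \<and> A *v pre w = w"
    using row_space_preimage BW(2) by (metis subsetD)
  define X where "X = outer_sum BW pre"
  have AX: "A *v (X *v y) = W.proj *v y" for y
    using pre by (simp add: X_def outer_sum_mult vec.sum matrix_vector_mult_scaleR)
  have XV: "X *v y \<in> row_space A" for y
    unfolding X_def outer_sum_mult
    by (intro subspace_sum[OF subspace_row_space] subspace_scale[OF subspace_row_space])
       (use pre in auto)
  have XA: "X *v (A *v z) = V.proj *v z" for z
  proof (rule eq_iff_diff_eq_0[THEN iffD2], rule row_space_null_eq_zero)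
    show "X *v (A *v z) - V.proj *v z \<in> row_space A"
      using XV V.proj_in_span BV(2) subspace_diff[OF subspace_row_space] by metis
    have "A *v (X *v (A *v z)) = A *v z"
      unfolding AX using BW(3) W.proj_fixes_span by auto
    then show "A *v (X *v (A *v z) - V.proj *v z) = 0"
      using V.matrix_vector_mult_proj_row_space[OF BV(2)] by (simp add: vec.diff)
  qed
  have "A ** X ** A = A"
    unfolding matrix_eq
    by (simp add: matrix_vector_mul_assoc[symmetric] XA
        V.matrix_vector_mult_proj_row_space[OF BV(2)])
  moreover have "X ** A ** X = X"
    unfolding matrix_eq using XV BV(2) V.proj_fixes_span
    by (simp add: matrix_vector_mul_assoc[symmetric] XA)
  moreover have "A ** X = W.proj" and "X ** A = V.proj"
    unfolding matrix_eq by (simp_all add: matrix_vector_mul_assoc[symmetric] AX XA)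
  ultimately have "penrose A X"
    unfolding penrose_def by (simp add: transpose_outer_sum_id)
  then show ?thesis
    by blast
qed

lemma penrose_pinv: "penrose A (pinv A)"
  unfolding pinv_eq_The_penrose
  using penrose_exists penrose_unique by (metis theI')

lemma pinv_solves_consistent:
  assumes "A *v x = b"
  shows "A *v (pinv A *v b) = b"
proof -
  have "A ** pinv A ** A = A"
    using penrose_pinv[of A] by (simp add: penrose_def)
  then show ?thesis
    using assms by (metis matrix_vector_mul_assoc)
qed

lemma pinv_mult_row_space:
  assumes "u \<in> row_space A"
  shows "pinv A *v (A *v u) = u"
proof -
  obtain y where u: "u = transpose A *v y"
    using assms unfolding row_space_def by auto
  have "pinv A ** A ** transpose A = transpose A"
    by (rule penrose_transpose_absorb_left[OF penrose_pinv])
  then show ?thesis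
    using u by (metis matrix_vector_mul_assoc)
qed

lemma quadratic_nonneg_imp_linear_coeff_zero:
  fixes a c :: real
  assumes "\<And>t. 0 \<le> a * t + c * t^2"
  shows "a = 0"
proof (rule ccontr)
  assume "a \<noteq> 0"
  define s where "s = \<bar>c\<bar> + 1"
  have s: "0 < s" "c \<le> s"
    by (auto simp: s_def)
  define t where "t = - a / (2 * s)"
  have "a * t + c * t^2 \<le> a * t + s * t^2"
    using s by (intro add_left_mono mult_right_mono) auto
  also have "\<dots> = -(a^2) / (4 * s)"
    using s by (simp add: t_def field_simps power2_eq_square)
  also have "\<dots> < 0"
    using \<open>a \<noteq> 0\<close> s by simp
  finally show False
    using assms[of t] by simp
qed

lemma norm_add_scaleR_square:
  "norm (x + t *\<^sub>R y)^2 = norm x^2 + 2 * t * (x \<bullet> y) + t^2 * norm y^2"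
  for x y :: "'a::real_inner"
  unfolding power2_norm_eq_inner
  by (simp add: inner_commute algebra_simps power2_eq_square)

lemma row_space_rayleigh_min:
  fixes M :: "real^'n^'m"
  assumes "M \<noteq> 0"
  obtains e where "e \<in> row_space M" "norm e = 1"
    "\<And>v. v \<in> row_space M \<Longrightarrow> norm (M *v e)^2 * norm v^2 \<le> norm (M *v v)^2"
proof -
  let ?K = "sphere 0 1 \<inter> row_space M"
  obtain v0 where "v0 \<in> row_space M" "v0 \<noteq> 0"
    using row_space_nonzero[OF assms] by metis
  then have "v0 /\<^sub>R norm v0 \<in> ?K"
    using subspace_scale[OF subspace_row_space] by auto
  then have "?K \<noteq> {}"
    by blast
  moreover have "compact ?K"
    by (intro compact_Int_closed compact_sphere closed_subspace subspace_row_space)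
  moreover have "continuous_on ?K (\<lambda>v. norm (M *v v)^2)"
    by (intro continuous_intros linear_continuous_on[OF matrix_vector_mul_bounded_linear])
  ultimately obtain e where e: "e \<in> ?K"
    and min: "\<And>u. u \<in> ?K \<Longrightarrow> norm (M *v e)^2 \<le> norm (M *v u)^2"
    using continuous_attains_inf by metis
  have "norm (M *v e)^2 * norm v^2 \<le> norm (M *v v)^2" if v: "v \<in> row_space M" for v
  proof (cases "v = 0")
    case False
    then have "v /\<^sub>R norm v \<in> ?K"
      using v subspace_scale[OF subspace_row_space] by auto
    then have "norm (M *v e)^2 \<le> norm (M *v (v /\<^sub>R norm v))^2"
      by (rule min)
    also have "\<dots> = norm (M *v v)^2 / norm v^2"
      by (simp add: matrix_vector_mult_scaleR power_mult_distrib divide_inverse power_inverse)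
    finally have "norm (M *v e)^2 \<le> norm (M *v v)^2 / norm v^2" .
    then show ?thesis
      using False by (simp add: field_simps)
  qed simp
  then show ?thesis
    using that e by auto
qed

text \<open>Perturbing e along the residual w = M^T M e - mu e gives a quadratic in t that is
  nonnegative and whose linear coefficient is 2 |w|^2.\<close>

lemma rayleigh_min_eigenvector:
  fixes M :: "real^'n^'m"
  assumes e: "e \<in> row_space M" "norm e = 1"
    and min: "\<And>v. v \<in> row_space M \<Longrightarrow> norm (M *v e)^2 * norm v^2 \<le> norm (M *v v)^2"
  shows "transpose M *v (M *v e) = norm (M *v e)^2 *\<^sub>R e"
proof -
  define \<mu> where "\<mu> = norm (M *v e)^2"
  define w where "w = transpose M *v (M *v e) - \<mu> *\<^sub>R e"
  have w: "w \<in> row_space M"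
    unfolding w_def
    by (intro subspace_diff[OF subspace_row_space] subspace_scale[OF subspace_row_space] e
        transpose_mult_in_row_space)
  have "(M *v e) \<bullet> (M *v w) = w \<bullet> (transpose M *v (M *v e))"
    by (metis inner_commute inner_matrix_vector_transpose)
  also have "\<dots> = w \<bullet> (w + \<mu> *\<^sub>R e)"
    by (simp add: w_def)
  finally have "(M *v e) \<bullet> (M *v w) - \<mu> * (e \<bullet> w) = w \<bullet> w"
    by (simp add: inner_add_right inner_commute)
  then have slope: "w \<bullet> w = (M *v e) \<bullet> (M *v w) - \<mu> * (e \<bullet> w)"
    by simp
  have "0 \<le> 2 * (w \<bullet> w) * t + (norm (M *v w)^2 - \<mu> * norm w^2) * t^2" for t
  proof -
    have v: "e + t *\<^sub>R w \<in> row_space M"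
      by (intro subspace_add[OF subspace_row_space] subspace_scale[OF subspace_row_space] e(1) w)
    have "\<mu> * norm (e + t *\<^sub>R w)^2 \<le> norm (M *v e + t *\<^sub>R (M *v w))^2"
      using min[OF v]
      unfolding \<mu>_def matrix_vector_right_distrib matrix_vector_mult_scaleR .
    then have "\<mu> * (1 + 2 * t * (e \<bullet> w) + t^2 * norm w^2)
        \<le> \<mu> + 2 * t * ((M *v e) \<bullet> (M *v w)) + t^2 * norm (M *v w)^2"
      by (simp only: norm_add_scaleR_square e(2) \<mu>_def[symmetric] power_one)
    then show ?thesis
      unfolding slope by (simp add: algebra_simps)
  qed
  then have "2 * (w \<bullet> w) = 0"
    by (rule quadratic_nonneg_imp_linear_coeff_zero)
  then show ?thesis
    by (simp add: w_def \<mu>_def)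
qed

lemma finite_eigenvalues_symmetric:
  fixes S :: "real^'n^'n"
  assumes symmetric: "\<And>x y. (S *v x) \<bullet> y = x \<bullet> (S *v y)"
  shows "finite {l. \<exists>v. v \<noteq> 0 \<and> S *v v = l *\<^sub>R v}" (is "finite ?L")
proof -
  obtain ev where ev: "ev l \<noteq> 0" "S *v ev l = l *\<^sub>R ev l" if "l \<in> ?L" for l
    using bchoice[of ?L "\<lambda>l v. v \<noteq> 0 \<and> S *v v = l *\<^sub>R v"] by auto
  have orth: "ev l1 \<bullet> ev l2 = 0" if "l1 \<in> ?L" "l2 \<in> ?L" "l1 \<noteq> l2" for l1 l2
  proof -
    have "l1 * (ev l1 \<bullet> ev l2) = (S *v ev l1) \<bullet> ev l2"
      using ev(2)[OF that(1)] by simp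
    also have "\<dots> = l2 * (ev l1 \<bullet> ev l2)"
      using ev(2)[OF that(2)] by (simp add: symmetric)
    finally show ?thesis
      using that(3) by simp
  qed
  have "inj_on ev ?L"
  proof (rule inj_onI, rule ccontr)
    fix l1 l2
    assume "l1 \<in> ?L" "l2 \<in> ?L" "ev l1 = ev l2" "l1 \<noteq> l2"
    then show False
      using orth[of l1 l2] ev(1)[of l1] by simp
  qed
  moreover have "independent (ev ` ?L)"
  proof (rule pairwise_orthogonal_independent)
    show "pairwise orthogonal (ev ` ?L)"
      using orth by (auto simp: pairwise_def orthogonal_def)
    show "0 \<notin> ev ` ?L"
      using ev(1) by (metis (no_types, lifting) imageE)
  qed
  then have "finite (ev ` ?L)"
    by (rule independent_imp_finite)
  ultimately show ?thesis
    by (rule finite_imageD[rotated])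
qed

lemma finite_eigenvalues_gram:
  fixes M :: "real^'n^'m"
  shows "finite {l. \<exists>v. v \<noteq> 0 \<and> transpose M *v (M *v v) = l *\<^sub>R v}"
proof -
  have "(transpose M ** M *v x) \<bullet> y = x \<bullet> (transpose M ** M *v y)" for x y
    by (metis inner_commute inner_matrix_vector_transpose matrix_vector_mul_assoc)
  then show ?thesis
    using finite_eigenvalues_symmetric[of "transpose M ** M"]
    unfolding matrix_vector_mul_assoc[symmetric] by blast
qed

lemma rayleigh_min_le_eigenvalue:
  fixes M :: "real^'n^'m"
  assumes min: "\<And>v. v \<in> row_space M \<Longrightarrow> norm (M *v e)^2 * norm v^2 \<le> norm (M *v v)^2"
    and l: "l \<noteq> 0" "v \<noteq> 0" "transpose M *v (M *v v) = l *\<^sub>R v"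
  shows "norm (M *v e)^2 \<le> l"
proof -
  have "v = (1 / l) *\<^sub>R (transpose M *v (M *v v))"
    using l by simp
  then have "v \<in> row_space M"
    by (metis subspace_scale[OF subspace_row_space] transpose_mult_in_row_space)
  then have "norm (M *v e)^2 * norm v^2 \<le> norm (M *v v)^2"
    by (rule min)
  also have "norm (M *v v)^2 = v \<bullet> (transpose M *v (M *v v))"
    unfolding power2_norm_eq_inner by (rule inner_matrix_vector_transpose)
  also have "\<dots> = l * norm v^2"
    unfolding l(3) by (simp add: power2_norm_eq_inner)
  finally show ?thesis
    using l(2) by simp
qed

lemma sigma_min_eq_rayleigh_min:
  fixes M :: "real^'n^'m"
  assumes e: "e \<in> row_space M" "norm e = 1"
    and min: "\<And>v. v \<in> row_space M \<Longrightarrow> norm (M *v e)^2 * norm v^2 \<le> norm (M *v v)^2"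
  shows "sigma_min M = norm (M *v e)"
proof -
  let ?L = "{l. l \<noteq> 0 \<and> (\<exists>v. v \<noteq> 0 \<and> transpose M *v (M *v v) = l *\<^sub>R v)}"
  have sigma: "sigma_min M = sqrt (Min ?L)"
    unfolding sigma_min_def scalar_mult_eq_scaleR matrix_vector_mul_assoc[symmetric] ..
  have "finite ?L"
    by (rule finite_subset[OF _ finite_eigenvalues_gram]) blast
  moreover have "norm (M *v e)^2 \<in> ?L"
  proof -
    have "M *v e \<noteq> 0" and "e \<noteq> 0"
      using row_space_null_eq_zero e by fastforce+
    then show ?thesis
      using rayleigh_min_eigenvector[OF e min] by auto
  qed
  moreover have "norm (M *v e)^2 \<le> l" if "l \<in> ?L" for l
    using that rayleigh_min_le_eigenvalue[OF min] by blast
  ultimately have "Min ?L = norm (M *v e)^2"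
    by (intro Min_eqI)
  then show ?thesis
    by (simp add: sigma)
qed

lemma norm_vec_square: "norm (v::real^'n)^2 = (\<Sum>i\<in>UNIV. (v $ i)^2)"
  unfolding power2_norm_eq_inner inner_vec_def by (simp add: power2_eq_square)

lemma frob_norm_square: "frob_norm M ^2 = (\<Sum>i\<in>UNIV. norm (row i M)^2)"
  unfolding frob_norm_def by (simp add: sum_nonneg norm_vec_square row_def)

lemma frob_norm_nonneg: "0 \<le> frob_norm M"
  by (simp add: frob_norm_def sum_nonneg)

lemma norm_matrix_vector_le_frob_norm: "norm (M *v x) \<le> frob_norm M * norm (x::real^'n)"
proof (rule power2_le_imp_le)
  have "norm (M *v x)^2 = (\<Sum>i\<in>UNIV. (row i M \<bullet> x)^2)"
    by (simp add: norm_vec_square matrix_vector_mul_component row_eq_nth)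
  also have "\<dots> \<le> (\<Sum>i\<in>UNIV. norm (row i M)^2 * norm x^2)"
  proof (rule sum_mono)
    fix i
    have "\<bar>row i M \<bullet> x\<bar>^2 \<le> (norm (row i M) * norm x)^2"
      by (intro power_mono Cauchy_Schwarz_ineq2) simp
    then show "(row i M \<bullet> x)^2 \<le> norm (row i M)^2 * norm x^2"
      by (simp add: power_mult_distrib)
  qed
  also have "\<dots> = (frob_norm M * norm x)^2"
    by (simp add: frob_norm_square sum_distrib_right power_mult_distrib)
  finally show "norm (M *v x)^2 \<le> (frob_norm M * norm x)^2" .
  show "0 \<le> frob_norm M * norm x"
    by (simp add: frob_norm_nonneg)
qed

lemma frob_norm_pos:
  assumes "M \<noteq> 0"
  shows "0 < frob_norm M"
proof -
  obtain i where "row i M \<noteq> 0"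
    using assms by (metis row_eq_nth vec_eq_iff zero_index)
  then have "0 < norm (row i M)^2"
    by simp
  also have "\<dots> \<le> frob_norm M ^2"
    unfolding frob_norm_square by (rule member_le_sum) auto
  finally have "0 < frob_norm M ^2" .
  then show ?thesis
    using frob_norm_nonneg
    by (metis less_le zero_power2)
qed

lemma sigma_min_attained:
  fixes M :: "real^'n^'m"
  assumes "M \<noteq> 0"
  obtains e where "e \<in> row_space M" "norm e = 1" "norm (M *v e) = sigma_min M"
proof -
  obtain e where e: "e \<in> row_space M" "norm e = 1"
    and min: "\<And>v. v \<in> row_space M \<Longrightarrow> norm (M *v e)^2 * norm v^2 \<le> norm (M *v v)^2"
    using row_space_rayleigh_min[OF assms] by metis
  then show ?thesis
    using that sigma_min_eq_rayleigh_min[OF e min] by simp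
qed

lemma sigma_min_mult_norm_le:
  fixes M :: "real^'n^'m"
  assumes "M \<noteq> 0" "v \<in> row_space M"
  shows "sigma_min M * norm v \<le> norm (M *v v)"
proof (rule power2_le_imp_le)
  obtain e where e: "e \<in> row_space M" "norm e = 1"
    and min: "\<And>v. v \<in> row_space M \<Longrightarrow> norm (M *v e)^2 * norm v^2 \<le> norm (M *v v)^2"
    using row_space_rayleigh_min[OF assms(1)] by metis
  then show "(sigma_min M * norm v)^2 \<le> norm (M *v v)^2"
    using min[OF assms(2)] by (simp add: sigma_min_eq_rayleigh_min[OF e min] power_mult_distrib)
qed simp

lemma sigma_min_pos:
  fixes M :: "real^'n^'m"
  assumes "M \<noteq> 0"
  shows "0 < sigma_min M"
proof -
  obtain e where "e \<in> row_space M" "norm e = 1" "norm (M *v e) = sigma_min M"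
    using sigma_min_attained[OF assms] by metis
  moreover have "M *v e \<noteq> 0"
    using row_space_null_eq_zero \<open>e \<in> row_space M\<close> \<open>norm e = 1\<close> by fastforce
  ultimately show ?thesis
    by (metis zero_less_norm_iff)
qed

lemma sigma_min_le_frob_norm:
  fixes M :: "real^'n^'m"
  assumes "M \<noteq> 0"
  shows "sigma_min M \<le> frob_norm M"
proof -
  obtain e where "norm e = 1" "norm (M *v e) = sigma_min M"
    using sigma_min_attained[OF assms] by metis
  then show ?thesis
    using norm_matrix_vector_le_frob_norm[of M e] by simp
qed

lemma one_le_spec_norm_pinv_mult_sigma_min:
  fixes M :: "real^'n^'m"
  assumes "M \<noteq> 0"
  shows "1 \<le> spec_norm (pinv M) * sigma_min M"
proof -
  obtain e where e: "e \<in> row_space M" "norm e = 1" "norm (M *v e) = sigma_min M"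
    using sigma_min_attained[OF assms] by metis
  have "norm (pinv M *v (M *v e)) \<le> spec_norm (pinv M) * norm (M *v e)"
    unfolding spec_norm_def by (rule onorm[OF matrix_vector_mul_bounded_linear])
  then show ?thesis
    by (simp add: pinv_mult_row_space[OF e(1)] e(2,3))
qed

lemma pmf_row_pmf:
  assumes "M \<noteq> 0"
  shows "pmf (row_pmf M) i = norm (row i M)^2 / frob_norm M ^2"
  unfolding row_pmf_def
proof (rule pmf_embed_pmf)
  have "(\<Sum>i\<in>UNIV. norm (row i M)^2 / frob_norm M ^2)
      = (\<Sum>i\<in>UNIV. norm (row i M)^2) / frob_norm M ^2"
    by (rule sum_divide_distrib[symmetric])
  also have "\<dots> = 1"
    using frob_norm_pos[OF assms] by (simp flip: frob_norm_square)
  finally show "(\<integral>\<^sup>+ i. ennreal (norm (row i M)^2 / frob_norm M ^2) \<partial>count_space UNIV) = 1"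
    by (simp add: nn_integral_count_space_finite)
qed simp

lemma norm_rk_step_sub:
  assumes "row i M \<noteq> 0"
  shows "norm (rk_step M c x i - z)^2 = norm (x - z)^2
           + ((c $ i - row i M \<bullet> z)^2 - (row i M \<bullet> (x - z))^2) / norm (row i M)^2"
proof -
  define a p r where "a = row i M" and "p = a \<bullet> (x - z)" and "r = c $ i - a \<bullet> z"
  define t where "t = (p - r) / norm a^2"
  have "a \<bullet> x - c $ i = p - r"
    by (simp add: p_def r_def inner_diff_right)
  then have "rk_step M c x i - z = (x - z) + (- t) *\<^sub>R a"
    unfolding rk_step_def a_def[symmetric] t_def by (simp add: algebra_simps)
  then have "norm (rk_step M c x i - z)^2
      = norm (x - z)^2 + 2 * (- t) * ((x - z) \<bullet> a) + (- t)^2 * norm a^2"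
    by (simp only: norm_add_scaleR_square)
  also have "\<dots> = norm (x - z)^2 + (r^2 - p^2) / norm a^2"
    using assms
    by (simp add: a_def[symmetric] t_def p_def[symmetric] inner_commute field_simps power2_eq_square)
  finally show ?thesis
    by (simp add: a_def p_def r_def)
qed

lemma expectation_norm_rk_step_sub:
  assumes rows: "\<And>i. row i M \<noteq> 0"
  shows "measure_pmf.expectation (row_pmf M) (\<lambda>i. norm (rk_step M c x i - z)^2)
           = norm (x - z)^2 + (norm (c - M *v z)^2 - norm (M *v (x - z))^2) / frob_norm M ^2"
proof -
  have "M \<noteq> 0"
    using rows by (rule nonzero_if_row_nonzero)
  define F where "F = frob_norm M ^2"
  have F: "0 < F"
    using frob_norm_pos[OF \<open>M \<noteq> 0\<close>] by (simp add: F_def)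
  have "measure_pmf.expectation (row_pmf M) (\<lambda>i. norm (rk_step M c x i - z)^2)
      = (\<Sum>i\<in>UNIV. norm (rk_step M c x i - z)^2 * pmf (row_pmf M) i)"
    by (rule integral_measure_pmf_real) auto
  also have "\<dots> = (\<Sum>i\<in>UNIV. norm (row i M)^2 / F * norm (x - z)^2
                    + ((c $ i - row i M \<bullet> z)^2 - (row i M \<bullet> (x - z))^2) / F)"
    using rows F
    by (intro sum.cong refl)
       (simp add: norm_rk_step_sub pmf_row_pmf[OF \<open>M \<noteq> 0\<close>] F_def field_simps)
  also have "\<dots> = (\<Sum>i\<in>UNIV. norm (row i M)^2) / F * norm (x - z)^2
                    + ((\<Sum>i\<in>UNIV. (c $ i - row i M \<bullet> z)^2)
                       - (\<Sum>i\<in>UNIV. (row i M \<bullet> (x - z))^2)) / F"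
    by (simp add: sum.distrib sum_subtractf sum_divide_distrib sum_distrib_right
        diff_divide_distrib)
  also have "\<dots> = norm (x - z)^2 + (norm (c - M *v z)^2 - norm (M *v (x - z))^2) / F"
    using F by (simp add: F_def frob_norm_square norm_vec_square matrix_vector_mul_component row_eq_nth)
  finally show ?thesis
    by (simp add: F_def)
qed

lemma integral_bind_pmf_finite_nonneg:
  fixes f :: "'b \<Rightarrow> real"
  assumes fin: "finite (set_pmf M)" "\<And>x. x \<in> set_pmf M \<Longrightarrow> finite (set_pmf (N x))"
    and nonneg: "\<And>y. 0 \<le> f y"
  shows "measure_pmf.expectation (bind_pmf M N) f
           = measure_pmf.expectation M (\<lambda>x. measure_pmf.expectation (N x) f)"
proof -
  have "finite (set_pmf (bind_pmf M N))"
    using fin by simp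
  then have "ennreal (measure_pmf.expectation (bind_pmf M N) f) = (\<integral>\<^sup>+y. f y \<partial>bind_pmf M N)"
    by (intro nn_integral_eq_integral[symmetric] integrable_measure_pmf_finite) (auto intro: nonneg)
  also have "\<dots> = (\<integral>\<^sup>+x. \<integral>\<^sup>+y. f y \<partial>N x \<partial>M)"
    by simp
  also have "\<dots> = (\<integral>\<^sup>+x. measure_pmf.expectation (N x) f \<partial>M)"
    by (intro nn_integral_cong_AE AE_pmfI nn_integral_eq_integral integrable_measure_pmf_finite fin)
       (auto intro: nonneg)
  also have "\<dots> = ennreal (measure_pmf.expectation M (\<lambda>x. measure_pmf.expectation (N x) f))"
    by (intro nn_integral_eq_integral integrable_measure_pmf_finite fin AE_pmfI
        integral_nonneg_AE AE_I2 nonneg)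
  finally show ?thesis
    by (subst (asm) ennreal_inj) (auto intro!: integral_nonneg_AE nonneg)
qed

lemma finite_set_pmf_rk_iter: "finite (set_pmf (rk_iter M c x0 k))"
  by (induction k) auto

lemma expectation_rk_iter_Suc:
  fixes f :: "real^'n \<Rightarrow> real"
  assumes "\<And>x. 0 \<le> f x"
  shows "measure_pmf.expectation (rk_iter M c x0 (Suc k)) f
           = measure_pmf.expectation (rk_iter M c x0 k)
               (\<lambda>x. measure_pmf.expectation (row_pmf M) (\<lambda>i. f (rk_step M c x i)))"
  unfolding rk_iter.simps
  by (subst integral_bind_pmf_finite_nonneg) (simp_all add: finite_set_pmf_rk_iter assms)

lemma rk_iter_sub_in_row_space:
  assumes "x0 - z \<in> row_space M" "x \<in> set_pmf (rk_iter M c x0 k)"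
  shows "x - z \<in> row_space M"
  using assms(2)
proof (induction k arbitrary: x)
  case 0
  then show ?case
    using assms(1) by simp
next
  case (Suc k)
  then obtain y i where y: "y \<in> set_pmf (rk_iter M c x0 k)" "x = rk_step M c y i"
    by auto
  have "x - z = (y - z) - ((row i M \<bullet> y - c $ i) / norm (row i M)^2) *\<^sub>R row i M"
    using y(2) by (simp add: rk_step_def algebra_simps)
  also have "\<dots> \<in> row_space M"
    by (intro subspace_diff[OF subspace_row_space] subspace_scale[OF subspace_row_space]
        Suc.IH y(1) row_in_row_space)
  finally show ?case .
qed

lemma expectation_norm_rk_step_sub_le:
  fixes M :: "real^'n^'m"
  assumes rows: "\<And>i. row i M \<noteq> 0" and "x - z \<in> row_space M"
  shows "measure_pmf.expectation (row_pmf M) (\<lambda>i. norm (rk_step M c x i - z)^2)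
           \<le> (1 - sigma_min M ^2 / frob_norm M ^2) * norm (x - z)^2
             + norm (c - M *v z)^2 / frob_norm M ^2"
proof -
  have "M \<noteq> 0"
    using rows by (rule nonzero_if_row_nonzero)
  have "(sigma_min M * norm (x - z))^2 \<le> norm (M *v (x - z))^2"
    using sigma_min_mult_norm_le[OF \<open>M \<noteq> 0\<close> assms(2)] sigma_min_pos[OF \<open>M \<noteq> 0\<close>]
    by (intro power_mono) auto
  then show ?thesis
    using frob_norm_pos[OF \<open>M \<noteq> 0\<close>]
    by (simp add: expectation_norm_rk_step_sub[OF rows] field_simps)
qed

lemma affine_recurrence_le:
  fixes d :: "nat \<Rightarrow> real"
  assumes step: "\<And>k. d (Suc k) \<le> q * d k + r" and "0 \<le> q" "q < 1" "0 \<le> r"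
  shows "d k \<le> q ^ k * d 0 + r / (1 - q)"
proof (induction k)
  case 0
  then show ?case
    using assms by simp
next
  case (Suc k)
  have "d (Suc k) \<le> q * (q ^ k * d 0 + r / (1 - q)) + r"
    using step[of k] mult_left_mono[OF Suc.IH \<open>0 \<le> q\<close>] by linarith
  also have "\<dots> = q ^ Suc k * d 0 + r / (1 - q)"
    using \<open>q < 1\<close> by (simp add: field_simps)
  finally show ?case .
qed

lemma expectation_rk_iter_Suc_le:
  fixes M :: "real^'n^'m"
  assumes rows: "\<And>i. row i M \<noteq> 0" and start: "x0 - z \<in> row_space M"
  shows "measure_pmf.expectation (rk_iter M c x0 (Suc k)) (\<lambda>x. norm (x - z)^2)
           \<le> (1 - sigma_min M ^2 / frob_norm M ^2)
               * measure_pmf.expectation (rk_iter M c x0 k) (\<lambda>x. norm (x - z)^2)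
             + norm (c - M *v z)^2 / frob_norm M ^2"
proof -
  let ?q = "1 - sigma_min M ^2 / frob_norm M ^2" and ?r = "norm (c - M *v z)^2 / frob_norm M ^2"
  have "measure_pmf.expectation (rk_iter M c x0 (Suc k)) (\<lambda>x. norm (x - z)^2)
      = measure_pmf.expectation (rk_iter M c x0 k)
          (\<lambda>x. measure_pmf.expectation (row_pmf M) (\<lambda>i. norm (rk_step M c x i - z)^2))"
    by (rule expectation_rk_iter_Suc) simp
  also have "\<dots> \<le> measure_pmf.expectation (rk_iter M c x0 k) (\<lambda>x. ?q * norm (x - z)^2 + ?r)"
    by (intro integral_mono_AE integrable_measure_pmf_finite finite_set_pmf_rk_iter AE_pmfI
        expectation_norm_rk_step_sub_le[OF rows] rk_iter_sub_in_row_space[OF start])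
  also have "\<dots> = ?q * measure_pmf.expectation (rk_iter M c x0 k) (\<lambda>x. norm (x - z)^2) + ?r"
    by (simp add: integrable_measure_pmf_finite finite_set_pmf_rk_iter)
  finally show ?thesis .
qed

lemma inverse_scaled_condition_number_le:
  fixes M :: "real^'n^'m"
  assumes "M \<noteq> 0"
  shows "1 / (spec_norm (pinv M)^2 * frob_norm M ^2) \<le> sigma_min M ^2 / frob_norm M ^2"
proof -
  have "1 \<le> (spec_norm (pinv M) * sigma_min M)^2"
    using one_le_spec_norm_pinv_mult_sigma_min[OF assms] by simp
  then have "1 / spec_norm (pinv M)^2 \<le> sigma_min M ^2"
    by (cases "spec_norm (pinv M) = 0") (simp_all add: power_mult_distrib divide_le_eq mult.commute)
  then show ?thesis
    using divide_right_mono[of _ _ "frob_norm M ^2"] by fastforce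
qed

lemma rk_expected_error_bound:
  fixes M :: "real^'n^'m"
  assumes rows: "\<And>i. row i M \<noteq> 0" and start: "x0 - z \<in> row_space M"
  shows "measure_pmf.expectation (rk_iter M c x0 k) (\<lambda>x. norm (x - z)^2)
           \<le> (1 - 1 / (spec_norm (pinv M)^2 * frob_norm M ^2)) ^ k * norm (x0 - z)^2
             + norm (c - M *v z)^2 / sigma_min M ^2"
proof -
  have "M \<noteq> 0"
    using rows by (rule nonzero_if_row_nonzero)
  define F \<sigma> where "F = frob_norm M ^2" and "\<sigma> = sigma_min M"
  define q where "q = 1 - \<sigma>^2 / F"
  define d where "d k = measure_pmf.expectation (rk_iter M c x0 k) (\<lambda>x. norm (x - z)^2)" for k
  have F: "0 < F" and \<sigma>: "0 < \<sigma>" "\<sigma> \<le> frob_norm M"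
    using frob_norm_pos[OF \<open>M \<noteq> 0\<close>] sigma_min_pos[OF \<open>M \<noteq> 0\<close>]
      sigma_min_le_frob_norm[OF \<open>M \<noteq> 0\<close>]
    by (simp_all add: F_def \<sigma>_def)
  have q: "0 \<le> q" "q < 1"
    using F \<sigma> by (simp_all add: q_def F_def power_mono)
  have "d (Suc k) \<le> q * d k + norm (c - M *v z)^2 / F" for k
    unfolding d_def q_def F_def \<sigma>_def by (rule expectation_rk_iter_Suc_le[OF rows start])
  then have "d k \<le> q ^ k * d 0 + norm (c - M *v z)^2 / F / (1 - q)"
    using q F by (intro affine_recurrence_le) auto
  also have "norm (c - M *v z)^2 / F / (1 - q) = norm (c - M *v z)^2 / \<sigma>^2"
    using F \<sigma> by (simp add: q_def)
  also have "q ^ k \<le> (1 - 1 / (spec_norm (pinv M)^2 * F)) ^ k"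
    using inverse_scaled_condition_number_le[OF \<open>M \<noteq> 0\<close>] q
    by (intro power_mono) (simp_all add: q_def F_def \<sigma>_def)
  finally show ?thesis
    using start by (simp add: d_def F_def \<sigma>_def mult_right_mono)
qed

lemma matrix_add_rdistrib: "((B::real^'n^'m) + C) ** (A::real^'k^'n) = B ** A + C ** A"
  by (simp add: matrix_matrix_mult_def vec_eq_iff sum.distrib algebra_simps)

theorem corollary3p4:
  fixes A :: "real^'n^'m" and E :: "real^'m^'m" and F :: "real^'n^'n"
    and b \<epsilon> :: "real^'m" and x0 :: "real^'n" and k :: nat
  assumes invE: "invertible (mat 1 + E)"
    and invF: "invertible (mat 1 + F)"
    and rows_nz: "\<And>i. row i ((mat 1 + E) ** A ** (mat 1 + F)) \<noteq> 0"
    and consistent: "\<exists>x. A *v x = b"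
    and start: "x0 - pinv A *v b \<in> range (\<lambda>y. transpose ((mat 1 + E) ** A ** (mat 1 + F)) *v y)"
  shows "let At = (mat 1 + E) ** A ** (mat 1 + F);
             bt = b + \<epsilon>;
             dA = E ** A + A ** F + E ** A ** F;
             xLS = pinv A *v b;
             Rt = (spec_norm (pinv At))^2 * (frob_norm At)^2
         in measure_pmf.expectation (rk_iter At bt x0 k) (\<lambda>x. (norm (x - xLS))^2)
            \<le> (1 - 1 / Rt) ^ k * (norm (x0 - xLS))^2
               + (norm (dA *v xLS - \<epsilon>))^2 / (sigma_min At)^2"
proof -
  define At where "At = (mat 1 + E) ** A ** (mat 1 + F)"
  define dA where "dA = E ** A + A ** F + E ** A ** F"
  define xLS where "xLS = pinv A *v b"
  have "At = A + dA"
    unfolding At_def dA_def by (simp add: matrix_add_ldistrib matrix_add_rdistrib matrix_mul_assoc)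
  moreover have "A *v xLS = b"
    using consistent pinv_solves_consistent unfolding xLS_def by blast
  ultimately have "b + \<epsilon> - At *v xLS = - (dA *v xLS - \<epsilon>)"
    by (simp add: matrix_vector_mult_add_rdistrib)
  then have "norm (b + \<epsilon> - At *v xLS) = norm (dA *v xLS - \<epsilon>)"
    by (simp only: norm_minus_cancel)
  moreover have "x0 - xLS \<in> row_space At"
    using start unfolding row_space_def At_def xLS_def .
  ultimately show ?thesis
    using rk_expected_error_bound[OF rows_nz[folded At_def], of x0 xLS "b + \<epsilon>" k]
    unfolding Let_def At_def[symmetric] dA_def[symmetric] xLS_def[symmetric] by simp
qed

end
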